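(* Let $X$ and $Y$ be mm-spaces. Then \[ \square(X,Y)=\min_{\pi,S}\max\{1-\pi(S),\ \operatorname{dis} S\}, \] where $\pi$ runs over all transport plans $\pi\in\Pi(m_X,m_Y)$ and $S$ runs over all closed subsets of $X\times Y$; in particular the minimum is attained by some pair $(\pi,S)$.
   Context: An mm-space is a triple $(X,d_X,m_X)$ where $(X,d_X)$ is a complete separable metric space and $m_X$ is a Borel probability measure on $X$. For Borel probability measures $\mu,\nu$ on $X,Y$, $\Pi(\mu,\nu)$ denotes the set of Borel probability measures $\pi$ on $X\times Y$ with $(\mathrm{pr}_1)_*\pi=\mu$ and $(\mathrm{pr}_2)_*\pi=\nu$ (transport plans). For a nonempty $S\subset X\times Y$, $\operatorname{dis}S:=\sup\{|d_X(x,x')-d_Y(y,y')| : (x,y),(x',y')\in S\}$, and $\operatorname{dis}\emptyset:=\infty$. Let $I=[0,1)$ with Lebesgue measure $\mathcal L^1$. A parameter of $X$ is a Borel map $\varphi:I\to X$ with $\varphi_*\mathcal L^1=m_X$. For pseudo-metrics $\rho_1,\rho_2$ on $I$, $\square(\rho_1,\rho_2)$ is the infimum of $\varepsilon\ge0$ such that there is a Borel $I_0\subset I$ with $\mathcal L^1(I_0)\ge1-\varepsilon$ and $|\rho_1(s,t)-\rho_2(s,t)|\le\varepsilon$ for all $s,t\in I_0$. The box distance is $\square(X,Y):=\inf_{\varphi,\psi}\square(\varphi^*d_X,\psi^*d_Y)$ over parameters $\varphi$ of $X$ and $\psi$ of $Y$, where $\varphi^*d_X(s,t):=d_X(\varphi(s),\varphi(t))$.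 *)

theory Defs
  imports "HOL-Analysis.Analysis" "HOL-Probability.Probability"
begin

definition unitI :: "real measure" where
  "unitI = restrict_space lborel {0..<1}"

text \<open>mm-space: a complete separable metric space (type of class polish_space)
  with a Borel probability measure.\<close>
definition mm_measure :: "'a::topological_space measure \<Rightarrow> bool" where
  "mm_measure m \<longleftrightarrow> prob_space m \<and> sets m = sets borel"

definition transport_plans ::
  "'a::topological_space measure \<Rightarrow> 'b::topological_space measure \<Rightarrow> ('a \<times> 'b) measure set" where
  "transport_plans \<mu> \<nu> = {\<pi>. prob_space \<pi> \<and> sets \<pi> = sets borel \<and>
      distr \<pi> borel fst = \<mu> \<and> distr \<pi> borel snd = \<nu>}"

definition dis :: "('a::metric_space \<times> 'b::metric_space) set \<Rightarrow> ereal" where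
  "dis S = (if S = {} then \<infinity> else
     (SUP p \<in> S \<times> S. ereal \<bar>dist (fst (fst p)) (fst (snd p)) - dist (snd (fst p)) (snd (snd p))\<bar>))"

definition parameter :: "'a::topological_space measure \<Rightarrow> (real \<Rightarrow> 'a) \<Rightarrow> bool" where
  "parameter m \<phi> \<longleftrightarrow> \<phi> \<in> borel_measurable unitI \<and> distr unitI borel \<phi> = m"

definition box_pm :: "(real \<Rightarrow> real \<Rightarrow> real) \<Rightarrow> (real \<Rightarrow> real \<Rightarrow> real) \<Rightarrow> real" where
  "box_pm \<rho>1 \<rho>2 = Inf {\<epsilon>. \<epsilon> \<ge> 0 \<and> (\<exists>I0. I0 \<in> sets borel \<and> I0 \<subseteq> {0..<1} \<and>
      measure lborel I0 \<ge> 1 - \<epsilon> \<and>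
      (\<forall>s\<in>I0. \<forall>t\<in>I0. \<bar>\<rho>1 s t - \<rho>2 s t\<bar> \<le> \<epsilon>))}"

definition box_dist :: "'a::metric_space measure \<Rightarrow> 'b::metric_space measure \<Rightarrow> real" where
  "box_dist mX mY = Inf {box_pm (\<lambda>s t. dist (\<phi> s) (\<phi> t)) (\<lambda>s t. dist (\<psi> s) (\<psi> t)) |\<phi> \<psi>.
      parameter mX \<phi> \<and> parameter mY \<psi>}"

end

theory Submission
  imports Defs "HOL-Library.Diagonal_Subsequence"
begin

text \<open>
  Lower bound: a transport plan \<open>\<pi>\<close> is itself the law of a parameter \<open>\<Phi>\<close>, so \<open>fst \<circ> \<Phi>\<close> and
  \<open>snd \<circ> \<Phi>\<close> are parameters of \<open>X\<close> and \<open>Y\<close>, and the preimage of \<open>S\<close> under \<open>\<Phi>\<close> witnesses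
  \<open>\<box>(X,Y) \<le> max (1 - \<pi> S) (dis S)\<close>. Conversely, parameters \<open>\<phi>, \<psi>\<close> and a set \<open>I0\<close> nearly realising
  \<open>\<box>(X,Y)\<close> give the plan \<open>(\<phi>, \<psi>)\<^sub>* \<L>\<close> and the closed set \<open>closure ((\<phi>, \<psi>) ` I0)\<close>.

  Attainment is a compactness argument. Near-optimal pairs \<open>(\<pi>\<^sub>n, S\<^sub>n)\<close> are uniformly tight, so
  along a subsequence the \<open>\<pi>\<^sub>n\<close> converge to a plan \<open>\<pi>\<close> whose mass on closed sets dominates the
  lower limits of the masses of the \<open>\<pi>\<^sub>n\<close>. The upper Kuratowski limit \<open>S\<close> of the \<open>S\<^sub>n\<close> then
  has \<open>\<pi>\<close>-mass at least \<open>1 - \<box>(X,Y)\<close>. If the subsequence is also chosen so that the \<open>S\<^sub>n\<close>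
  eventually meet or eventually miss each ball of a countable base, every point of \<open>S\<close> is a limit
  of points of the \<open>S\<^sub>n\<close>, so \<open>dis S \<le> \<box>(X,Y)\<close>.

  Both the parameters and the limit measure are built from a tree of nested countable Borel
  partitions of the space into cells of small diameter: an interval of \<open>[0,1)\<close> whose length is
  the mass of a cell is mapped into that cell, and the limit along the tree defines the map.
\<close>

subsection \<open>Cells\<close>

definition dense_seq :: "nat \<Rightarrow> 'z::metric_space" where
  "dense_seq = (SOME d. \<forall>z. \<forall>e>0. \<exists>i. dist z (d i) < e)"

lemma dense_seq_approx:
  fixes z :: "'z::{metric_space,second_countable_topology}"
  assumes "e > 0" shows "\<exists>i. dist z (dense_seq i) < e"
proof -
  obtain X :: "'z set" where X: "countable X" "\<And>U. open U \<Longrightarrow> U \<noteq> {} \<Longrightarrow> \<exists>d\<in>X. d \<in> U"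
    using countable_dense_setE by blast
  have "X \<noteq> {}" using X(2)[of UNIV] by auto
  then have range: "range (from_nat_into X) = X" using X(1) by (simp add: range_from_nat_into)
  have "\<exists>i. dist z (from_nat_into X i) < e" if "e > 0" for z :: 'z and e
  proof -
    obtain d where "d \<in> X" "d \<in> ball z e" using X(2)[of "ball z e"] \<open>e > 0\<close> by auto
    then show ?thesis using range by (metis imageE mem_ball)
  qed
  then show ?thesis
    unfolding dense_seq_def using someI_ex[of "\<lambda>d::nat \<Rightarrow> 'z. \<forall>z. \<forall>e>0. \<exists>i. dist z (d i) < e"] assms
    by blast
qed

text \<open>At level \<open>l\<close> a point is assigned the first dense point within distance \<open>2^-l\<close>; a cell
  is the set of points sharing the assignments of levels \<open>0, \<dots>, k-1\<close>, so cells of depth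
  \<open>l+1\<close> have diameter below \<open>2 * 2^-l\<close>.\<close>

definition cell_index :: "nat \<Rightarrow> 'z::metric_space \<Rightarrow> nat" where
  "cell_index l z = (LEAST i. dist z (dense_seq i) < (1/2)^l)"

definition cell_code :: "'z::metric_space \<Rightarrow> nat \<Rightarrow> nat list" where
  "cell_code z k = map (\<lambda>l. cell_index l z) [0..<k]"

definition cell :: "nat list \<Rightarrow> 'z::metric_space set" where
  "cell ks = {z. cell_code z (length ks) = ks}"

lemma cell_index_approx:
  fixes z :: "'z::{metric_space,second_countable_topology}"
  shows "dist z (dense_seq (cell_index l z)) < (1/2)^l"
  unfolding cell_index_def by (rule LeastI_ex) (simp add: dense_seq_approx)

lemma cell_index_le: "dist z (dense_seq i) < (1/2)^l \<Longrightarrow> cell_index l z \<le> i"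
  unfolding cell_index_def by (rule Least_le)

lemma length_cell_code [simp]: "length (cell_code z k) = k"
  by (simp add: cell_code_def)

lemma nth_cell_code: "l < k \<Longrightarrow> cell_code z k ! l = cell_index l z"
  by (simp add: cell_code_def)

lemma take_cell_code: "k \<le> m \<Longrightarrow> take k (cell_code z m) = cell_code z k"
  by (simp add: cell_code_def take_map)

lemma cell_code_eq_iff: "cell_code z k = ks \<longleftrightarrow> length ks = k \<and> (\<forall>l<k. cell_index l z = ks ! l)"
  by (auto simp: nth_cell_code intro!: nth_equalityI)

lemma cell_eq_Inter: "cell ks = (\<Inter>l<length ks. {z. cell_index l z = ks ! l})"
  by (auto simp: cell_def cell_code_eq_iff)

lemma in_cell_code: "z \<in> cell (cell_code z k)"
  by (simp add: cell_def)

lemma cell_Nil [simp]: "cell [] = UNIV"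
  by (simp add: cell_def cell_code_def)

lemma cell_snoc: "cell (ks @ [i]) = cell ks \<inter> {z. cell_index (length ks) z = i}"
  by (auto simp: cell_def cell_code_def)

lemma cell_eq_UN_children: "cell ks = (\<Union>i. cell (ks @ [i]))"
  by (auto simp: cell_snoc)

lemma disjoint_family_children: "disjoint_family (\<lambda>i. cell (ks @ [i]))"
  by (auto simp: disjoint_family_on_def cell_snoc)

lemma disjoint_cells: "length ks = length ks' \<Longrightarrow> ks \<noteq> ks' \<Longrightarrow> cell ks \<inter> cell ks' = {}"
  by (auto simp: cell_def)

lemma cell_subset_take: "k \<le> length ks \<Longrightarrow> cell ks \<subseteq> cell (take k ks)"
proof
  fix z assume k: "k \<le> length ks" and "z \<in> cell ks"
  then have "take k ks = cell_code z k" using take_cell_code[OF k, of z] by (simp add: cell_def)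
  then show "z \<in> cell (take k ks)" using k by (simp add: cell_def min_def)
qed

lemma dist_in_cell_less:
  fixes z w :: "'z::{metric_space,second_countable_topology}"
  assumes "z \<in> cell ks" "w \<in> cell ks" "l < length ks"
  shows "dist z w < 2 * (1/2)^l"
proof -
  have "cell_index l z = ks ! l" "cell_index l w = ks ! l"
    using assms by (auto simp: cell_eq_Inter)
  then have "dist z (dense_seq (ks!l)) < (1/2)^l" "dist w (dense_seq (ks!l)) < (1/2)^l"
    using cell_index_approx by metis+
  then show ?thesis using dist_triangle3[of z w "dense_seq (ks!l)"] by (simp add: dist_commute)
qed

lemma cell_index_eq:
  fixes z :: "'z::{metric_space,second_countable_topology}"
  shows "cell_index l z = i \<longleftrightarrow>
    z \<in> ball (dense_seq i) ((1/2)^l) - (\<Union>j<i. ball (dense_seq j) ((1/2)^l))"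
proof
  assume "cell_index l z = i"
  then show "z \<in> ball (dense_seq i) ((1/2)^l) - (\<Union>j<i. ball (dense_seq j) ((1/2)^l))"
    using cell_index_approx[of z l] cell_index_le[of z _ l] by (auto simp: dist_commute leD)
next
  assume "z \<in> ball (dense_seq i) ((1/2)^l) - (\<Union>j<i. ball (dense_seq j) ((1/2)^l))"
  then show "cell_index l z = i"
    using cell_index_approx[of z l] cell_index_le[of z i l]
    by (metis dist_commute Diff_iff UN_I lessThan_iff le_neq_implies_less mem_ball)
qed

lemma sets_cell [measurable, simp]:
  "cell ks \<in> sets (borel :: 'z::{metric_space,second_countable_topology} measure)"
proof -
  have "{z::'z. cell_index l z = i} = ball (dense_seq i) ((1/2)^l) - (\<Union>j<i. ball (dense_seq j) ((1/2)^l))"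
    for l i by (auto simp: cell_index_eq)
  then have index_set: "{z::'z. cell_index l z = i} \<in> sets borel" for l i
    by (simp add: borel_open)
  show ?thesis
  proof (induction ks rule: rev_induct)
    case (snoc i ks)
    then show ?case unfolding cell_snoc by (rule sets.Int[OF _ index_set])
  qed simp
qed

lemma bounded_cell_index_compact:
  fixes K :: "'z::{metric_space,second_countable_topology} set"
  assumes "compact K"
  shows "\<exists>N. \<forall>z\<in>K. cell_index l z < N"
proof -
  have "K \<subseteq> (\<Union>i. ball (dense_seq i) ((1/2)^l))"
    using cell_index_approx[of _ l] by (force simp: dist_commute)
  then obtain D where D: "finite D" "K \<subseteq> (\<Union>i\<in>D. ball (dense_seq i) ((1/2)^l))"
    using compactE_image[OF assms, of UNIV "\<lambda>i. ball (dense_seq i) ((1/2)^l)"] by auto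
  have "cell_index l z < Suc (Max D)" if "z \<in> K" for z
  proof -
    obtain i where "i \<in> D" "dist z (dense_seq i) < (1/2)^l"
      using D(2) \<open>z \<in> K\<close> by (auto simp: dist_commute)
    then show ?thesis using cell_index_le D(1) by (meson Max_ge le_imp_less_Suc order_trans)
  qed
  then show ?thesis by blast
qed

lemma finite_cell_codes_compact:
  fixes K :: "'z::{metric_space,second_countable_topology} set"
  assumes "compact K" shows "finite ((\<lambda>z. cell_code z k) ` K)"
proof -
  obtain N where N: "\<And>l z. z \<in> K \<Longrightarrow> cell_index l z < N l"
    using bounded_cell_index_compact[OF assms] by metis
  have "set (cell_code z k) \<subseteq> {..<(\<Sum>l<k. N l)}" if "z \<in> K" for z
  proof
    fix x assume "x \<in> set (cell_code z k)"
    then obtain l where "l < k" "x = cell_index l z" by (auto simp: cell_code_def)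
    then have "x < N l" "N l \<le> (\<Sum>l<k. N l)" using N[OF that] by (auto intro: member_le_sum)
    then show "x \<in> {..<(\<Sum>l<k. N l)}" by simp
  qed
  then have "(\<lambda>z. cell_code z k) ` K \<subseteq> {xs. set xs \<subseteq> {..<(\<Sum>l<k. N l)} \<and> length xs = k}"
    by auto
  then show ?thesis by (rule finite_subset) (rule finite_lists_length_eq, simp)
qed

subsection \<open>Parameters from masses of cells\<close>

lemma space_unitI [simp]: "space unitI = {0..<1}"
  by (simp add: unitI_def space_restrict_space)

lemma sets_unitI_iff: "A \<in> sets unitI \<longleftrightarrow> A \<subseteq> {0..<1} \<and> A \<in> sets borel"
  unfolding unitI_def by (subst sets_restrict_space_iff) auto

lemma emeasure_unitI: "A \<subseteq> {0..<1} \<Longrightarrow> emeasure unitI A = emeasure lborel A"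
  unfolding unitI_def by (rule emeasure_restrict_space) auto

lemma measure_unitI: "A \<subseteq> {0..<1} \<Longrightarrow> measure unitI A = measure lborel A"
  by (simp add: measure_def emeasure_unitI)

lemma prob_space_unitI: "prob_space unitI"
  by (rule prob_spaceI) (simp add: emeasure_unitI)

lemma finite_measure_unitI: "finite_measure unitI"
  using prob_space_unitI by (simp add: prob_space_def)

text \<open>The interval of a node is split into consecutive intervals for its children, in the order
  of their last index.\<close>

definition mass_interval_start :: "(nat list \<Rightarrow> real) \<Rightarrow> nat list \<Rightarrow> real" where
  "mass_interval_start p ks = (\<Sum>l<length ks. \<Sum>j<ks!l. p (take l ks @ [j]))"

definition mass_interval :: "(nat list \<Rightarrow> real) \<Rightarrow> nat list \<Rightarrow> real set" where
  "mass_interval p ks = {mass_interval_start p ks ..< mass_interval_start p ks + p ks}"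

lemma mass_interval_start_snoc:
  "mass_interval_start p (ks @ [i]) = mass_interval_start p ks + (\<Sum>j<i. p (ks @ [j]))"
proof -
  have "(\<Sum>l<length ks. \<Sum>j<(ks @ [i])!l. p (take l (ks @ [i]) @ [j])) = mass_interval_start p ks"
    unfolding mass_interval_start_def by (intro sum.cong) (simp_all add: nth_append)
  then show ?thesis by (simp add: mass_interval_start_def)
qed

locale mass_tree =
  fixes p :: "nat list \<Rightarrow> real"
  assumes mass_Nil: "p [] = 1" and mass_nonneg: "p ks \<ge> 0"
    and sums_mass_children: "(\<lambda>i. p (ks @ [i])) sums p ks"
begin

lemma sum_mass_children_le: "(\<Sum>j<i. p (ks @ [j])) \<le> p ks"
  using sum_le_suminf[OF sums_summable[OF sums_mass_children], of "{..<i}"]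
  by (simp add: mass_nonneg sums_unique[OF sums_mass_children, symmetric])

lemma mass_interval_Nil: "mass_interval p [] = {0..<1}"
  by (simp add: mass_interval_def mass_interval_start_def mass_Nil)

lemma mass_interval_snoc_subset: "mass_interval p (ks @ [i]) \<subseteq> mass_interval p ks"
proof -
  have "(\<Sum>j<i. p (ks @ [j])) + p (ks @ [i]) \<le> p ks"
    using sum_mass_children_le[of ks "Suc i"] by simp
  moreover have "0 \<le> (\<Sum>j<i. p (ks @ [j]))" by (simp add: sum_nonneg mass_nonneg)
  ultimately show ?thesis
    unfolding mass_interval_def mass_interval_start_snoc by auto
qed

lemma disjoint_mass_interval_snoc:
  assumes "i < i'" shows "mass_interval p (ks @ [i]) \<inter> mass_interval p (ks @ [i']) = {}"
proof -
  have "(\<Sum>j<Suc i. p (ks @ [j])) \<le> (\<Sum>j<i'. p (ks @ [j]))"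
    using assms by (intro sum_mono2) (auto simp: mass_nonneg)
  then have "mass_interval_start p (ks @ [i]) + p (ks @ [i]) \<le> mass_interval_start p (ks @ [i'])"
    by (simp add: mass_interval_start_snoc)
  then show ?thesis unfolding mass_interval_def by auto
qed

lemma mass_interval_snoc_cover:
  assumes t: "t \<in> mass_interval p ks" shows "\<exists>i. t \<in> mass_interval p (ks @ [i])"
proof -
  let ?s = "\<lambda>n. \<Sum>j<n. p (ks @ [j])" and ?u = "t - mass_interval_start p ks"
  have "?u < p ks" using t by (auto simp: mass_interval_def)
  then have "eventually (\<lambda>n. ?u < ?s n) sequentially"
    using order_tendstoD(1)[OF sums_mass_children[unfolded sums_def]] by blast
  then obtain N where "?u < ?s N" by (auto simp: eventually_sequentially)
  define n where "n = (LEAST n. ?u < ?s n)"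
  have n: "?u < ?s n" "\<And>m. m < n \<Longrightarrow> \<not> ?u < ?s m"
    unfolding n_def using \<open>?u < ?s N\<close> by (fast intro: LeastI, fast dest: not_less_Least)
  have "n \<noteq> 0"
  proof
    assume "n = 0" then show False using n(1) t by (simp add: mass_interval_def)
  qed
  then obtain i where "n = Suc i" using not0_implies_Suc by blast
  then have "t \<in> mass_interval p (ks @ [i])"
    using n(1) n(2)[of i] by (simp add: mass_interval_def mass_interval_start_snoc)
  then show ?thesis ..
qed

lemma mass_interval_subset_take: "k \<le> length ks \<Longrightarrow> mass_interval p ks \<subseteq> mass_interval p (take k ks)"
proof (induction ks rule: rev_induct)
  case (snoc i ks)
  then show ?case
    using mass_interval_snoc_subset[of ks i] by (cases "k = Suc (length ks)") auto
qed simp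

lemma mass_interval_subset: "mass_interval p ks \<subseteq> {0..<1}"
  using mass_interval_subset_take[of 0 ks] by (simp add: mass_interval_Nil)

lemma mass_interval_unique:
  "length ks = length ks' \<Longrightarrow> t \<in> mass_interval p ks \<Longrightarrow> t \<in> mass_interval p ks' \<Longrightarrow> ks = ks'"
proof (induction ks arbitrary: ks' rule: rev_induct)
  case (snoc i ks)
  then obtain ks'' i' where ks': "ks' = ks'' @ [i']"
    by (metis length_Suc_conv_rev length_append_singleton)
  have "t \<in> mass_interval p ks" "t \<in> mass_interval p ks''"
    using snoc.prems ks' mass_interval_snoc_subset by blast+
  then have "ks = ks''" using snoc.IH snoc.prems(1) ks' by simp
  moreover have "i = i'"
  proof (rule ccontr)
    assume "i \<noteq> i'"
    then have "mass_interval p (ks @ [i]) \<inter> mass_interval p (ks @ [i']) = {}"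
      using disjoint_mass_interval_snoc Int_commute by (metis linorder_neqE_nat)
    then show False using snoc.prems ks' \<open>ks = ks''\<close> by blast
  qed
  ultimately show ?case using ks' by simp
qed simp

lemma disjoint_mass_intervals:
  "length ks = length ks' \<Longrightarrow> ks \<noteq> ks' \<Longrightarrow> mass_interval p ks \<inter> mass_interval p ks' = {}"
  using mass_interval_unique by blast

lemma emeasure_mass_interval: "emeasure lborel (mass_interval p ks) = p ks"
  by (simp add: mass_interval_def mass_nonneg)

definition interval_code :: "real \<Rightarrow> nat \<Rightarrow> nat list" where
  "interval_code t k = (THE ks. length ks = k \<and> t \<in> mass_interval p ks)"

lemma interval_code_eqI:
  assumes "length ks = k" "t \<in> mass_interval p ks" shows "interval_code t k = ks"
  unfolding interval_code_def using assms mass_interval_unique by (intro the_equality) auto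

lemma interval_code:
  assumes "t \<in> {0..<1}"
  shows "length (interval_code t k) = k" "t \<in> mass_interval p (interval_code t k)"
proof -
  have "\<exists>ks. length ks = k \<and> t \<in> mass_interval p ks"
  proof (induction k)
    case 0 then show ?case using assms by (simp add: mass_interval_Nil)
  next
    case (Suc k)
    then obtain ks i where "length ks = k" "t \<in> mass_interval p (ks @ [i])"
      using mass_interval_snoc_cover by blast
    then show ?case by (intro exI[of _ "ks @ [i]"]) simp
  qed
  then obtain ks where "length ks = k" "t \<in> mass_interval p ks" by blast
  then show "length (interval_code t k) = k" "t \<in> mass_interval p (interval_code t k)"
    using interval_code_eqI by simp_all
qed

lemma take_interval_code: "t \<in> {0..<1} \<Longrightarrow> k \<le> m \<Longrightarrow> take k (interval_code t m) = interval_code t k"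
  using interval_code[of t m] mass_interval_subset_take[of k "interval_code t m"]
  by (intro interval_code_eqI[symmetric]) auto

lemma mass_interval_code_pos: "t \<in> {0..<1} \<Longrightarrow> p (interval_code t k) > 0"
  using interval_code(2)[of t k] by (auto simp: mass_interval_def)

lemma measurable_interval_code: "(\<lambda>t. interval_code t k) \<in> unitI \<rightarrow>\<^sub>M count_space UNIV"
proof (subst measurable_count_space_eq2_countable, safe)
  fix ks :: "nat list"
  have "(\<lambda>t. interval_code t k) -` {ks} \<inter> space unitI = (if length ks = k then mass_interval p ks else {})"
  proof (cases "length ks = k")
    case True
    have "interval_code t k = ks \<longleftrightarrow> t \<in> mass_interval p ks" if "t \<in> {0..<1}" for t
      using interval_code_eqI[OF True, of t] interval_code[OF that, of k] by auto
    then show ?thesis using True mass_interval_subset[of ks] by auto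
  next
    case False
    then show ?thesis using interval_code(1) by auto
  qed
  then show "(\<lambda>t. interval_code t k) -` {ks} \<inter> space unitI \<in> sets unitI"
    using mass_interval_subset by (simp add: sets_unitI_iff mass_interval_def)
qed auto

end

lemma ex_two_half_power_less:
  assumes "e > 0" shows "\<exists>l. 2 * (1/2::real)^l < e"
proof -
  obtain l where "(1/2::real)^l < e/2" using real_arch_pow_inv[of "e/2" "1/2::real"] assms by auto
  then show ?thesis by (intro exI[of _ l]) simp
qed

definition hit_mass :: "(nat list \<Rightarrow> real) \<Rightarrow> 'z::metric_space set \<Rightarrow> nat \<Rightarrow> ennreal" where
  "hit_mass p F k = (\<integral>\<^sup>+ks. ennreal (p ks) \<partial>count_space {ks. length ks = k \<and> cell ks \<inter> F \<noteq> {}})"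

text \<open>The interval of \<open>ks\<close> has length \<open>p ks\<close> and is sent towards \<open>cell ks\<close>; the points chosen in
  the nested cells whose intervals contain \<open>t\<close> form a Cauchy sequence, since cells shrink.\<close>

locale mass_tree_rep = mass_tree p for p +
  fixes rep :: "nat list \<Rightarrow> 'z::{complete_space,second_countable_topology}"
  assumes rep_in_cell: "0 < p ks \<Longrightarrow> rep ks \<in> cell ks"
begin

definition tree_param :: "real \<Rightarrow> 'z" where
  "tree_param t = lim (\<lambda>k. rep (interval_code t k))"

lemma cell_interval_code_mono:
  "t \<in> {0..<1} \<Longrightarrow> k \<le> m \<Longrightarrow> cell (interval_code t m) \<subseteq> cell (interval_code t k)"
  using cell_subset_take[of k "interval_code t m"] take_interval_code[of t k m] interval_code(1)[of t m]
  by simp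

lemma rep_interval_code_in_cell:
  "t \<in> {0..<1} \<Longrightarrow> k \<le> m \<Longrightarrow> rep (interval_code t m) \<in> cell (interval_code t k)"
  using rep_in_cell[OF mass_interval_code_pos] cell_interval_code_mono by blast

lemma tree_param_LIMSEQ:
  assumes t: "t \<in> {0..<1}" shows "(\<lambda>k. rep (interval_code t k)) \<longlonglongrightarrow> tree_param t"
proof -
  have "Cauchy (\<lambda>k. rep (interval_code t k))"
  proof (rule metric_CauchyI)
    fix e :: real assume "e > 0"
    then obtain l where l: "2 * (1/2::real)^l < e" using ex_two_half_power_less by blast
    have "dist (rep (interval_code t m)) (rep (interval_code t n)) < e" if "Suc l \<le> m" "Suc l \<le> n" for m n
      using dist_in_cell_less[OF rep_interval_code_in_cell[OF t that(1)] rep_interval_code_in_cell[OF t that(2)], where l=l]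
        interval_code(1)[OF t] l by simp
    then show "\<exists>M. \<forall>m\<ge>M. \<forall>n\<ge>M. dist (rep (interval_code t m)) (rep (interval_code t n)) < e"
      by blast
  qed
  then show ?thesis unfolding tree_param_def by (simp add: Cauchy_convergent_iff convergent_LIMSEQ_iff)
qed

lemma dist_tree_param_le:
  assumes t: "t \<in> {0..<1}" and y: "y \<in> cell (interval_code t (Suc l))"
  shows "dist (tree_param t) y \<le> 2 * (1/2)^l"
proof (rule LIMSEQ_le_const2)
  show "(\<lambda>m. dist (rep (interval_code t m)) y) \<longlonglongrightarrow> dist (tree_param t) y"
    by (intro tendsto_intros tree_param_LIMSEQ t)
  show "\<exists>N. \<forall>m\<ge>N. dist (rep (interval_code t m)) y \<le> 2 * (1/2)^l"
    using dist_in_cell_less[OF rep_interval_code_in_cell[OF t] y, of _ l] interval_code(1)[OF t]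
    by (intro exI[of _ "Suc l"]) (simp add: less_imp_le)
qed

lemma tree_param_in_closed:
  assumes F: "closed F" and t: "t \<in> {0..<1}" and hit: "\<And>k. cell (interval_code t k) \<inter> F \<noteq> {}"
  shows "tree_param t \<in> F"
proof (rule closed_approachable[OF F, THEN iffD1], intro allI impI)
  fix e :: real assume "e > 0"
  then obtain l where l: "2 * (1/2::real)^l < e" using ex_two_half_power_less by blast
  obtain y where y: "y \<in> cell (interval_code t (Suc l))" "y \<in> F" using hit[of "Suc l"] by blast
  have "dist y (tree_param t) < e"
    using dist_tree_param_le[OF t y(1)] l by (simp add: dist_commute)
  then show "\<exists>y\<in>F. dist y (tree_param t) < e" using y(2) by blast
qed

lemma measurable_tree_param: "tree_param \<in> borel_measurable unitI"
proof (rule borel_measurable_LIMSEQ_metric[where f="\<lambda>k t. rep (interval_code t k)"])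
  show "(\<lambda>t. rep (interval_code t k)) \<in> borel_measurable unitI" for k
    by (rule measurable_compose[OF measurable_interval_code]) simp
qed (simp add: tree_param_LIMSEQ)

lemma emeasure_tree_param_closed_ge:
  assumes F: "closed F"
  shows "(INF k. hit_mass p F k) \<le> emeasure (distr unitI borel tree_param) F"
proof -
  define G where "G k = {ks. length ks = k \<and> cell ks \<inter> F \<noteq> {}}" for k
  define E where "E k = {t\<in>{0..<1}. cell (interval_code t k) \<inter> F \<noteq> {}}" for k
  have E_eq: "E k = (\<Union>ks\<in>G k. mass_interval p ks)" for k
  proof
    show "E k \<subseteq> (\<Union>ks\<in>G k. mass_interval p ks)"
    proof
      fix t assume "t \<in> E k"
      then have "interval_code t k \<in> G k" "t \<in> mass_interval p (interval_code t k)"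
        using interval_code[of t k] by (auto simp: E_def G_def)
      then show "t \<in> (\<Union>ks\<in>G k. mass_interval p ks)" by blast
    qed
    show "(\<Union>ks\<in>G k. mass_interval p ks) \<subseteq> E k"
    proof clarify
      fix ks t assume "ks \<in> G k" "t \<in> mass_interval p ks"
      moreover from this have "interval_code t k = ks" by (intro interval_code_eqI) (auto simp: G_def)
      ultimately show "t \<in> E k" using mass_interval_subset[of ks] by (auto simp: E_def G_def)
    qed
  qed
  have sets_interval: "mass_interval p ks \<in> sets lborel" for ks
    by (simp add: mass_interval_def)
  have disj: "disjoint_family_on (mass_interval p) (G k)" for k
    using disjoint_mass_intervals by (auto simp: disjoint_family_on_def G_def)
  have "emeasure lborel (E k) = hit_mass p F k" for k
    unfolding E_eq hit_mass_def G_def[symmetric]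
    by (subst emeasure_UN_countable[OF sets_interval _ disj]) (simp_all add: emeasure_mass_interval)
  moreover have "E k \<in> sets lborel" for k
    unfolding E_eq by (intro sets.countable_UN'' sets_interval) simp
  moreover have "decseq E"
  proof (rule decseq_SucI)
    show "E (Suc k) \<subseteq> E k" for k
      using cell_interval_code_mono[of _ k "Suc k"] by (auto simp: E_def)
  qed
  moreover have "emeasure lborel (E 0) \<noteq> \<infinity>"
  proof -
    have "emeasure lborel (E 0) \<le> emeasure lborel {0..<1::real}"
      by (rule emeasure_mono) (auto simp: E_def)
    then show ?thesis by (auto simp: top_unique)
  qed
  ultimately have "(INF k. hit_mass p F k) = emeasure lborel (\<Inter>k. E k)"
    using INF_emeasure_decseq'[of E lborel] by auto
  also have "\<dots> \<le> emeasure lborel (tree_param -` F \<inter> {0..<1})"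
  proof (rule emeasure_mono)
    show "(\<Inter>k. E k) \<subseteq> tree_param -` F \<inter> {0..<1}"
      using tree_param_in_closed[OF F] by (auto simp: E_def)
    show "tree_param -` F \<inter> {0..<1} \<in> sets lborel"
      using measurable_sets[OF measurable_tree_param borel_closed[OF F]] by (simp add: sets_unitI_iff)
  qed
  also have "\<dots> = emeasure (distr unitI borel tree_param) F"
    using F by (simp add: emeasure_distr measurable_tree_param borel_closed emeasure_unitI)
  finally show ?thesis .
qed

end

subsection \<open>Limits of tight sequences of probability measures\<close>

lemma measure_eqI_closed_le:
  fixes M N :: "'z::{complete_space,second_countable_topology} measure"
  assumes M: "prob_space M" "sets M = sets borel" and N: "prob_space N" "sets N = sets borel"
    and le: "\<And>F. closed F \<Longrightarrow> measure M F \<le> measure N F"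
  shows "N = M"
proof -
  interpret M: prob_space M by fact
  interpret N: prob_space N by fact
  have space: "space M = UNIV" "space N = UNIV"
    using sets_eq_imp_space_eq[OF M(2)] sets_eq_imp_space_eq[OF N(2)] by simp_all
  have open_le: "emeasure N U \<le> emeasure M U" if "open U" for U
  proof -
    have "measure M (UNIV - U) \<le> measure N (UNIV - U)"
      using that by (intro le closed_Diff) simp_all
    then show ?thesis
      using M.prob_compl[of U] N.prob_compl[of U] M(2) N(2) space that
      by (simp add: borel_open M.emeasure_eq_measure N.emeasure_eq_measure)
  qed
  have borel_le: "emeasure N B \<le> emeasure M B" if B: "B \<in> sets borel" for B
  proof -
    have "emeasure N B \<le> (INF U\<in>{U. B \<subseteq> U \<and> open U}. emeasure M U)"
    proof (rule INF_greatest)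
      fix U assume "U \<in> {U. B \<subseteq> U \<and> open U}"
      then have "emeasure N B \<le> emeasure N U"
        using N(2) by (intro emeasure_mono) (auto intro: borel_open)
      also have "\<dots> \<le> emeasure M U" using open_le \<open>U \<in> _\<close> by blast
      finally show "emeasure N B \<le> emeasure M U" .
    qed
    also have "\<dots> = emeasure M B"
      by (rule outer_regular[OF M(2) _ B, symmetric]) simp
    finally show ?thesis .
  qed
  show ?thesis
  proof (rule measure_eqI)
    fix B assume "B \<in> sets N"
    then have B: "B \<in> sets borel" using N by simp
    then have "measure N (UNIV - B) \<le> measure M (UNIV - B)"
      using borel_le[of "UNIV - B"] by (simp add: M.emeasure_eq_measure N.emeasure_eq_measure)
    then have "emeasure M B \<le> emeasure N B"
      using M.prob_compl[of B] N.prob_compl[of B] B M(2) N(2) space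
      by (simp add: M.emeasure_eq_measure N.emeasure_eq_measure)
    then show "emeasure N B = emeasure M B" using borel_le[OF B] by simp
  qed (use M N in simp)
qed

lemma prob_space_tight:
  fixes M :: "'z::{complete_space,second_countable_topology} measure"
  assumes "prob_space M" and sets: "sets M = sets borel" and "e > 0"
  shows "\<exists>K. compact K \<and> measure M (UNIV - K) \<le> e"
proof -
  interpret prob_space M by fact
  have space: "space M = UNIV" using sets_eq_imp_space_eq[OF sets] by simp
  have "ennreal (1 - e) < emeasure M UNIV"
    using emeasure_space_1 space \<open>e > 0\<close> by (simp add: ennreal_lessI)
  also have "\<dots> = (SUP K\<in>{K. K \<subseteq> UNIV \<and> compact K}. emeasure M K)"
    by (rule inner_regular[OF sets]) auto
  finally obtain K where K: "compact K" "ennreal (1 - e) < emeasure M K"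
    by (auto simp: less_SUP_iff)
  then have "K \<in> sets M" using sets by (simp add: borel_compact)
  moreover have "1 - e < measure M K"
  proof (cases "1 - e < 0")
    case True then show ?thesis by (meson less_le_trans measure_nonneg)
  next
    case False then show ?thesis using K(2) by (simp add: emeasure_eq_measure ennreal_less_iff)
  qed
  ultimately show ?thesis using K(1) prob_compl space by (intro exI[of _ K]) auto
qed

lemma sums_LIMSEQ_uniform_tail:
  fixes a :: "nat \<Rightarrow> nat \<Rightarrow> real"
  assumes sums: "\<And>n. (\<lambda>i. a n i) sums b n" and nonneg: "\<And>n i. 0 \<le> a n i"
    and lim_a: "\<And>i. (\<lambda>n. a n i) \<longlonglongrightarrow> \<alpha> i" and lim_b: "b \<longlonglongrightarrow> \<beta>"
    and tail: "\<And>e. e > 0 \<Longrightarrow> \<exists>M. \<forall>n. \<forall>N\<ge>M. b n - (\<Sum>i<N. a n i) \<le> e"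
  shows "\<alpha> sums \<beta>"
proof -
  have lim_partial: "(\<lambda>n. \<Sum>i<N. a n i) \<longlonglongrightarrow> (\<Sum>i<N. \<alpha> i)" for N
    by (intro tendsto_sum lim_a)
  have upper: "(\<Sum>i<N. \<alpha> i) \<le> \<beta>" for N
    using sum_le_suminf[OF sums_summable[OF sums]] nonneg sums_unique[OF sums]
    by (intro LIMSEQ_le[OF lim_partial lim_b]) auto
  have lower: "\<beta> - e \<le> (\<Sum>i<N. \<alpha> i)" if "\<forall>n. b n - (\<Sum>i<N. a n i) \<le> e" for e N
    using that by (intro LIMSEQ_le[OF tendsto_diff[OF lim_b tendsto_const] lim_partial])
      (auto simp: algebra_simps)
  show ?thesis unfolding sums_def
  proof (rule metric_LIMSEQ_I)
    fix r :: real assume "r > 0"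
    then obtain M where "\<forall>n. \<forall>N\<ge>M. b n - (\<Sum>i<N. a n i) \<le> r/2" using tail[of "r/2"] by auto
    then have "dist (\<Sum>i<N. \<alpha> i) \<beta> < r" if "M \<le> N" for N
      using lower[of N "r/2"] upper[of N] \<open>r > 0\<close> that by (simp add: dist_real_def)
    then show "\<exists>M. \<forall>N\<ge>M. dist (\<Sum>i<N. \<alpha> i) \<beta> < r" by blast
  qed
qed

lemma nn_integral_count_space_mono:
  "A \<subseteq> B \<Longrightarrow> integral\<^sup>N (count_space A) f \<le> integral\<^sup>N (count_space B) f"
  by (auto simp: nn_integral_count_space_indicator indicator_def intro!: nn_integral_mono)

lemma measure_le_finite_cells:
  fixes M :: "'z::{complete_space,second_countable_topology} measure"
  assumes "finite_measure M" "sets M = sets borel" and K: "compact K"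
  shows "measure M F \<le> (\<Sum>ks\<in>(\<lambda>z. cell_code z k) ` (F \<inter> K). measure M (cell ks)) + measure M (UNIV - K)"
proof -
  interpret finite_measure M by fact
  let ?G = "(\<lambda>z. cell_code z k) ` (F \<inter> K)"
  have fin: "finite ?G"
    using finite_cell_codes_compact[OF K] by (rule finite_subset[rotated]) auto
  have cells: "cell ks \<in> sets M" for ks using assms(2) by simp
  have K': "UNIV - K \<in> sets M"
    using assms(2) borel_compact[OF K] by (metis sets.compl_sets space_borel)
  have UG: "(\<Union>ks\<in>?G. cell ks) \<in> sets M" using fin cells by (intro sets.finite_UN) auto
  have "F \<subseteq> (\<Union>ks\<in>?G. cell ks) \<union> (UNIV - K)" using in_cell_code by blast
  then have "measure M F \<le> measure M ((\<Union>ks\<in>?G. cell ks) \<union> (UNIV - K))"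
    using UG K' by (intro finite_measure_mono) auto
  also have "\<dots> \<le> measure M (\<Union>ks\<in>?G. cell ks) + measure M (UNIV - K)"
    using UG K' by (rule measure_Un_le)
  also have "measure M (\<Union>ks\<in>?G. cell ks) = (\<Sum>ks\<in>?G. measure M (cell ks))"
    using fin cells by (intro finite_measure_finite_Union) (auto simp: disjoint_family_on_def disjoint_cells)
  finally show ?thesis .
qed

context
  fixes \<mu> :: "nat \<Rightarrow> 'z::{complete_space,second_countable_topology} measure"
    and p :: "nat list \<Rightarrow> real"
  assumes prob: "\<And>n. prob_space (\<mu> n)" and sets: "\<And>n. sets (\<mu> n) = sets borel"
    and tight: "\<And>e. e > 0 \<Longrightarrow> \<exists>K. compact K \<and> (\<forall>n. measure (\<mu> n) (UNIV - K) \<le> e)"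
    and lim_cell: "\<And>ks. (\<lambda>n. measure (\<mu> n) (cell ks)) \<longlonglongrightarrow> p ks"
begin

lemma mass_tree_cell_limit: "mass_tree p"
proof
  interpret prob_space "\<mu> n" for n by (rule prob)
  have space: "space (\<mu> n) = UNIV" for n using sets_eq_imp_space_eq[OF sets[of n]] by simp
  show "p [] = 1" using lim_cell[of "[]"] prob_space space by (simp add: LIMSEQ_const_iff)
  show "0 \<le> p ks" for ks by (rule LIMSEQ_le_const[OF lim_cell]) simp
  show "(\<lambda>i. p (ks @ [i])) sums p ks" for ks
  proof (rule sums_LIMSEQ_uniform_tail[OF _ _ lim_cell lim_cell])
    show "(\<lambda>i. measure (\<mu> n) (cell (ks @ [i]))) sums measure (\<mu> n) (cell ks)" for n
    proof -
      have "(\<lambda>i. measure (\<mu> n) (cell (ks @ [i]))) sums measure (\<mu> n) (\<Union>i. cell (ks @ [i]))"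
        using sets[of n] disjoint_family_children by (intro finite_measure_UNION) auto
      then show ?thesis by (simp flip: cell_eq_UN_children)
    qed
    fix e :: real assume "e > 0"
    then obtain K where K: "compact K" "\<And>n. measure (\<mu> n) (UNIV - K) \<le> e" using tight by blast
    have K': "UNIV - K \<in> sets borel"
      using borel_compact[OF K(1)] by (metis sets.compl_sets space_borel)
    obtain M where M: "\<forall>z\<in>K. cell_index (length ks) z < M"
      using bounded_cell_index_compact[OF K(1)] by blast
    have "measure (\<mu> n) (cell ks) - (\<Sum>i<N. measure (\<mu> n) (cell (ks @ [i]))) \<le> e" if "M \<le> N" for n N
    proof -
      have "cell ks \<subseteq> (\<Union>i<N. cell (ks @ [i])) \<union> (UNIV - K)"
        using M that by (force simp: cell_snoc)
      then have "measure (\<mu> n) (cell ks) \<le> measure (\<mu> n) ((\<Union>i<N. cell (ks @ [i])) \<union> (UNIV - K))"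
        using sets[of n] K' by (intro finite_measure_mono) auto
      also have "\<dots> \<le> measure (\<mu> n) (\<Union>i<N. cell (ks @ [i])) + measure (\<mu> n) (UNIV - K)"
        using sets[of n] K' by (intro measure_Un_le) auto
      also have "measure (\<mu> n) (\<Union>i<N. cell (ks @ [i])) = (\<Sum>i<N. measure (\<mu> n) (cell (ks @ [i])))"
        using disjoint_family_children[of ks] sets[of n]
        by (intro finite_measure_finite_Union) (auto simp: disjoint_family_on_def)
      finally show ?thesis using K(2)[of n] by simp
    qed
    then show "\<exists>M. \<forall>n. \<forall>N\<ge>M. measure (\<mu> n) (cell ks) - (\<Sum>i<N. measure (\<mu> n) (cell (ks @ [i]))) \<le> e"
      by blast
  qed simp
qed

lemma hit_mass_cell_limit_ge:
  assumes ge: "\<And>e. e > 0 \<Longrightarrow> eventually (\<lambda>n. c - e \<le> measure (\<mu> n) F) sequentially"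
  shows "ennreal c \<le> hit_mass p F k"
proof (rule ennreal_le_epsilon)
  fix d :: real assume "0 < d"
  obtain K where K: "compact K" "\<And>n. measure (\<mu> n) (UNIV - K) \<le> d/2"
    using tight[of "d/2"] \<open>0 < d\<close> by auto
  let ?G = "(\<lambda>z. cell_code z k) ` (F \<inter> K)"
  have fin: "finite ?G"
    using finite_cell_codes_compact[OF K(1)] by (rule finite_subset[rotated]) auto
  have p_nonneg: "0 \<le> p ks" for ks by (rule LIMSEQ_le_const[OF lim_cell]) simp
  have "eventually (\<lambda>n. c - d/2 \<le> measure (\<mu> n) F) sequentially"
    using \<open>0 < d\<close> by (intro ge) simp
  then have "eventually (\<lambda>n. c - d \<le> (\<Sum>ks\<in>?G. measure (\<mu> n) (cell ks))) sequentially"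
  proof eventually_elim
    case (elim n)
    have "finite_measure (\<mu> n)" using prob[of n] by (simp add: prob_space_def)
    from measure_le_finite_cells[OF this sets[of n] K(1), of F k] K(2)[of n] elim
    show ?case by linarith
  qed
  then have "c - d \<le> (\<Sum>ks\<in>?G. p ks)"
    by (intro tendsto_lowerbound[OF tendsto_sum[OF lim_cell]]) simp_all
  then have "ennreal c \<le> ennreal ((\<Sum>ks\<in>?G. p ks) + d)"
    by (intro ennreal_leI) simp
  also have "\<dots> = ennreal (\<Sum>ks\<in>?G. p ks) + ennreal d"
    using \<open>0 < d\<close> p_nonneg by (intro ennreal_plus) (auto intro: sum_nonneg)
  also have "ennreal (\<Sum>ks\<in>?G. p ks) \<le> hit_mass p F k"
  proof -
    have "ennreal (\<Sum>ks\<in>?G. p ks) = (\<integral>\<^sup>+ks. ennreal (p ks) \<partial>count_space ?G)"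
      using fin p_nonneg by (simp add: nn_integral_count_space_finite sum_ennreal)
    also have "\<dots> \<le> hit_mass p F k"
      unfolding hit_mass_def using in_cell_code by (intro nn_integral_count_space_mono) auto
    finally show ?thesis .
  qed
  finally show "ennreal c \<le> hit_mass p F k + ennreal d" by (simp add: add_right_mono)
qed

end

text \<open>A weak form of Prokhorov's theorem, with the limit measure produced directly as the law of a
  parameter.\<close>
theorem tight_limit_parameter:
  fixes \<mu> :: "nat \<Rightarrow> 'z::{complete_space,second_countable_topology} measure"
  assumes prob: "\<And>n. prob_space (\<mu> n)" and sets: "\<And>n. sets (\<mu> n) = sets borel"
    and tight: "\<And>e. e > 0 \<Longrightarrow> \<exists>K. compact K \<and> (\<forall>n. measure (\<mu> n) (UNIV - K) \<le> e)"
    and conv: "\<And>ks. convergent (\<lambda>n. measure (\<mu> n) (cell ks))"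
  obtains \<phi> where "\<phi> \<in> borel_measurable unitI"
    and "\<And>F c. closed F \<Longrightarrow> (\<And>e. e > 0 \<Longrightarrow> eventually (\<lambda>n. c - e \<le> measure (\<mu> n) F) sequentially)
      \<Longrightarrow> c \<le> measure (distr unitI borel \<phi>) F"
proof -
  define p where "p ks = lim (\<lambda>n. measure (\<mu> n) (cell ks))" for ks
  have lim_cell: "(\<lambda>n. measure (\<mu> n) (cell ks)) \<longlonglongrightarrow> p ks" for ks
    unfolding p_def using conv convergent_LIMSEQ_iff by blast
  interpret mass_tree p
    by (rule mass_tree_cell_limit[OF prob sets tight lim_cell])
  interpret mass_tree_rep p "\<lambda>ks. SOME z. z \<in> (cell ks :: 'z set)"
  proof
    fix ks assume "0 < p ks"
    then have "cell ks \<noteq> ({} :: 'z set)" using lim_cell[of ks] by (auto simp: LIMSEQ_const_iff)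
    then show "(SOME z. z \<in> cell ks) \<in> (cell ks :: 'z set)" by (simp add: some_in_eq)
  qed
  have le: "c \<le> measure (distr unitI borel tree_param) F"
    if F: "closed F" and ge: "\<And>e. e > 0 \<Longrightarrow> eventually (\<lambda>n. c - e \<le> measure (\<mu> n) F) sequentially"
    for F c
  proof -
    have "ennreal c \<le> (INF k. hit_mass p F k)"
      using hit_mass_cell_limit_ge[OF prob sets tight lim_cell ge] by (simp add: le_INF_iff)
    also have "\<dots> \<le> emeasure (distr unitI borel tree_param) F"
      by (rule emeasure_tree_param_closed_ge[OF F])
    also have "\<dots> = ennreal (measure (distr unitI borel tree_param) F)"
      using prob_space.prob_space_distr[OF prob_space_unitI measurable_tree_param]
      by (simp add: prob_space_def finite_measure.emeasure_eq_measure)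
    finally show ?thesis
      using ennreal_le_iff[OF measure_nonneg] by blast
  qed
  show ?thesis by (rule that[OF measurable_tree_param le])
qed

lemma parameter_exists:
  fixes \<mu> :: "'z::{complete_space,second_countable_topology} measure"
  assumes prob: "prob_space \<mu>" and sets: "sets \<mu> = sets borel"
  shows "\<exists>\<phi>. parameter \<mu> \<phi>"
proof -
  have tight: "\<And>e. e > 0 \<Longrightarrow> \<exists>K. compact K \<and> (\<forall>n::nat. measure \<mu> (UNIV - K) \<le> e)"
    using prob_space_tight[OF prob sets] by simp
  obtain \<phi> where \<phi>: "\<phi> \<in> borel_measurable unitI"
    and ge: "\<And>F c. closed F \<Longrightarrow> (\<And>e. e > 0 \<Longrightarrow> eventually (\<lambda>n. c - e \<le> measure \<mu> F) sequentially)
      \<Longrightarrow> c \<le> measure (distr unitI borel \<phi>) F"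
    using tight_limit_parameter[of "\<lambda>_. \<mu>", OF prob sets tight convergent_const] by blast
  have "distr unitI borel \<phi> = \<mu>"
  proof (rule measure_eqI_closed_le[OF prob sets])
    show "prob_space (distr unitI borel \<phi>)" by (rule prob_space.prob_space_distr[OF prob_space_unitI \<phi>])
    show "measure \<mu> F \<le> measure (distr unitI borel \<phi>) F" if "closed F" for F
      using that by (rule ge) simp
  qed simp
  then show ?thesis using \<phi> unfolding parameter_def by blast
qed

subsection \<open>Distortion and box distance\<close>

definition distortion :: "('a::metric_space \<times> 'b::metric_space) \<Rightarrow> 'a \<times> 'b \<Rightarrow> real" where
  "distortion x y = \<bar>dist (fst x) (fst y) - dist (snd x) (snd y)\<bar>"

lemma dis_le_ereal_iff: "dis S \<le> ereal c \<longleftrightarrow> S \<noteq> {} \<and> (\<forall>x\<in>S. \<forall>y\<in>S. distortion x y \<le> c)"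
  by (auto simp: dis_def distortion_def SUP_le_iff)

lemma dis_nonneg: "0 \<le> dis S"
  unfolding dis_def by (auto intro: SUP_upper2[where i="(x, x)" for x])

lemma dis_singleton: "dis {x} = 0"
  by (simp add: dis_def)

lemma distortion_le_perturb:
  "distortion x y \<le> distortion x' y' + 2 * (dist x x' + dist y y')"
proof -
  have tri: "\<bar>dist a b - dist a' b'\<bar> \<le> dist a a' + dist b b'" for a b a' b' :: "'c::metric_space"
    by metric
  have "\<bar>dist (fst x) (fst y) - dist (fst x') (fst y')\<bar> \<le> dist x x' + dist y y'"
    using tri[of "fst x" "fst y" "fst x'" "fst y'"] dist_fst_le[of x x'] dist_fst_le[of y y'] by linarith
  moreover have "\<bar>dist (snd x) (snd y) - dist (snd x') (snd y')\<bar> \<le> dist x x' + dist y y'"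
    using tri[of "snd x" "snd y" "snd x'" "snd y'"] dist_snd_le[of x x'] dist_snd_le[of y y'] by linarith
  ultimately show ?thesis
    unfolding distortion_def by (smt (verit))
qed

lemma dis_closure_le:
  assumes "dis S \<le> ereal c" shows "dis (closure S) \<le> ereal c"
proof -
  have closed: "closed {z. distortion (fst z) (snd z) \<le> c}"
    unfolding distortion_def by (intro closed_Collect_le continuous_intros)
  have "S \<times> S \<subseteq> {z. distortion (fst z) (snd z) \<le> c}"
    using assms by (auto simp: dis_le_ereal_iff)
  then have "closure (S \<times> S) \<subseteq> {z. distortion (fst z) (snd z) \<le> c}"
    using closed by (rule closure_minimal)
  then have "closure S \<times> closure S \<subseteq> {z. distortion (fst z) (snd z) \<le> c}"
    by (simp add: closure_Times)
  then show ?thesis using assms by (auto simp: dis_le_ereal_iff)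
qed

definition box_witnesses :: "(real \<Rightarrow> real \<Rightarrow> real) \<Rightarrow> (real \<Rightarrow> real \<Rightarrow> real) \<Rightarrow> real set" where
  "box_witnesses \<rho>1 \<rho>2 = {\<epsilon>. \<epsilon> \<ge> 0 \<and> (\<exists>I0. I0 \<in> sets borel \<and> I0 \<subseteq> {0..<1} \<and>
      measure lborel I0 \<ge> 1 - \<epsilon> \<and> (\<forall>s\<in>I0. \<forall>t\<in>I0. \<bar>\<rho>1 s t - \<rho>2 s t\<bar> \<le> \<epsilon>))}"

lemma box_pm_eq_Inf: "box_pm \<rho>1 \<rho>2 = Inf (box_witnesses \<rho>1 \<rho>2)"
  by (simp add: box_pm_def box_witnesses_def)

lemma one_in_box_witnesses: "1 \<in> box_witnesses \<rho>1 \<rho>2"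
  unfolding box_witnesses_def by (intro CollectI conjI exI[of _ "{}"]) simp_all

lemma box_witnesses_nonneg: "\<epsilon> \<in> box_witnesses \<rho>1 \<rho>2 \<Longrightarrow> 0 \<le> \<epsilon>"
  by (simp add: box_witnesses_def)

lemma box_pm_le:
  assumes "0 \<le> \<epsilon>" "I0 \<in> sets borel" "I0 \<subseteq> {0..<1}" "1 - \<epsilon> \<le> measure lborel I0"
    and "\<And>s t. s \<in> I0 \<Longrightarrow> t \<in> I0 \<Longrightarrow> \<bar>\<rho>1 s t - \<rho>2 s t\<bar> \<le> \<epsilon>"
  shows "box_pm \<rho>1 \<rho>2 \<le> \<epsilon>"
proof -
  have "\<epsilon> \<in> box_witnesses \<rho>1 \<rho>2"
    unfolding box_witnesses_def using assms by blast
  then show ?thesis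
    unfolding box_pm_eq_Inf by (rule cInf_lower) (auto intro: bdd_belowI box_witnesses_nonneg)
qed

lemma box_pm_nonneg: "0 \<le> box_pm \<rho>1 \<rho>2"
  unfolding box_pm_eq_Inf using one_in_box_witnesses by (intro cInf_greatest box_witnesses_nonneg) auto

lemma box_pm_lessE:
  assumes "box_pm \<rho>1 \<rho>2 < c"
  obtains \<epsilon> I0 where "0 \<le> \<epsilon>" "\<epsilon> < c" "I0 \<in> sets borel" "I0 \<subseteq> {0..<1}" "1 - \<epsilon> \<le> measure lborel I0"
    "\<And>s t. s \<in> I0 \<Longrightarrow> t \<in> I0 \<Longrightarrow> \<bar>\<rho>1 s t - \<rho>2 s t\<bar> \<le> \<epsilon>"
proof -
  obtain \<epsilon> where "\<epsilon> \<in> box_witnesses \<rho>1 \<rho>2" "\<epsilon> < c"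
    using cInf_lessD[of "box_witnesses \<rho>1 \<rho>2" c] assms one_in_box_witnesses
    unfolding box_pm_eq_Inf by blast
  then show ?thesis using that unfolding box_witnesses_def by blast
qed

lemma box_dist_le:
  assumes "parameter mX \<phi>" "parameter mY \<psi>"
  shows "box_dist mX mY \<le> box_pm (\<lambda>s t. dist (\<phi> s) (\<phi> t)) (\<lambda>s t. dist (\<psi> s) (\<psi> t))"
  unfolding box_dist_def
proof (rule cInf_lower)
  show "bdd_below {box_pm (\<lambda>s t. dist (\<phi> s) (\<phi> t)) (\<lambda>s t. dist (\<psi> s) (\<psi> t)) |\<phi> \<psi>.
      parameter mX \<phi> \<and> parameter mY \<psi>}"
    by (rule bdd_belowI[of _ 0]) (auto simp: box_pm_nonneg)
qed (use assms in blast)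

lemma mm_measure_parameter:
  fixes mX :: "'a::polish_space measure"
  assumes "mm_measure mX" shows "\<exists>\<phi>. parameter mX \<phi>"
  using assms parameter_exists unfolding mm_measure_def by blast

lemma box_dist_nonneg:
  fixes mX :: "'a::polish_space measure" and mY :: "'b::polish_space measure"
  assumes "mm_measure mX" "mm_measure mY" shows "0 \<le> box_dist mX mY"
proof -
  obtain \<phi> \<psi> where "parameter mX \<phi>" "parameter mY \<psi>"
    using mm_measure_parameter[OF assms(1)] mm_measure_parameter[OF assms(2)] by blast
  then show ?thesis
    unfolding box_dist_def by (intro cInf_greatest) (auto simp: box_pm_nonneg)
qed

lemma box_dist_lessE:
  fixes mX :: "'a::polish_space measure" and mY :: "'b::polish_space measure"
  assumes "mm_measure mX" "mm_measure mY" "box_dist mX mY < c"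
  obtains \<phi> \<psi> where "parameter mX \<phi>" "parameter mY \<psi>"
    "box_pm (\<lambda>s t. dist (\<phi> s) (\<phi> t)) (\<lambda>s t. dist (\<psi> s) (\<psi> t)) < c"
proof -
  obtain \<phi> \<psi> where "parameter mX \<phi>" "parameter mY \<psi>"
    using mm_measure_parameter[OF assms(1)] mm_measure_parameter[OF assms(2)] by blast
  then have "{box_pm (\<lambda>s t. dist (\<phi> s) (\<phi> t)) (\<lambda>s t. dist (\<psi> s) (\<psi> t)) |\<phi> \<psi>.
      parameter mX \<phi> \<and> parameter mY \<psi>} \<noteq> {}" by blast
  from cInf_lessD[OF this assms(3)[unfolded box_dist_def]] that show ?thesis by blast
qed

lemma borel_measurable_fst: "fst \<in> borel_measurable borel"
  by (intro borel_measurable_continuous_onI continuous_intros)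

lemma borel_measurable_snd: "snd \<in> borel_measurable borel"
  by (intro borel_measurable_continuous_onI continuous_intros)

lemma parameter_distr:
  assumes \<phi>: "parameter \<mu> \<phi>" and f: "f \<in> borel_measurable borel"
  shows "parameter (distr \<mu> borel f) (f \<circ> \<phi>)"
proof -
  have \<phi>m: "\<phi> \<in> unitI \<rightarrow>\<^sub>M borel" and \<mu>: "\<mu> = distr unitI borel \<phi>"
    using \<phi> by (auto simp: parameter_def)
  have "distr \<mu> borel f = distr unitI borel (f \<circ> \<phi>)"
    unfolding \<mu> using f \<phi>m by (rule distr_distr)
  moreover have "f \<circ> \<phi> \<in> unitI \<rightarrow>\<^sub>M borel" using \<phi>m f by (rule measurable_comp)
  ultimately show ?thesis unfolding parameter_def by simp
qed

lemma transport_plan_parameters: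
  fixes \<phi> :: "real \<Rightarrow> 'a::polish_space" and \<psi> :: "real \<Rightarrow> 'b::polish_space"
  assumes "parameter mX \<phi>" "parameter mY \<psi>"
  shows "distr unitI borel (\<lambda>t. (\<phi> t, \<psi> t)) \<in> transport_plans mX mY"
proof -
  have "(\<lambda>t. (\<phi> t, \<psi> t)) \<in> borel_measurable unitI"
    using assms unfolding parameter_def by (intro borel_measurable_Pair) simp_all
  then have \<Phi>: "parameter (distr unitI borel (\<lambda>t. (\<phi> t, \<psi> t))) (\<lambda>t. (\<phi> t, \<psi> t))"
    by (simp add: parameter_def)
  have "parameter (distr (distr unitI borel (\<lambda>t. (\<phi> t, \<psi> t))) borel fst) \<phi>"
    using parameter_distr[OF \<Phi> borel_measurable_fst] by (simp add: o_def)
  moreover have "parameter (distr (distr unitI borel (\<lambda>t. (\<phi> t, \<psi> t))) borel snd) \<psi>"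
    using parameter_distr[OF \<Phi> borel_measurable_snd] by (simp add: o_def)
  ultimately show ?thesis
    using assms prob_space.prob_space_distr[OF prob_space_unitI] \<Phi>
    unfolding transport_plans_def parameter_def by auto
qed

lemma box_dist_le_plan:
  fixes mX :: "'a::polish_space measure" and mY :: "'b::polish_space measure"
  assumes \<pi>: "\<pi> \<in> transport_plans mX mY" and S: "S \<in> sets borel"
  shows "ereal (box_dist mX mY) \<le> max (ereal (1 - measure \<pi> S)) (dis S)"
proof (cases "dis S")
  case (real d)
  then have distortion: "\<And>x y. x \<in> S \<Longrightarrow> y \<in> S \<Longrightarrow> distortion x y \<le> d"
    using dis_le_ereal_iff[of S d] by simp
  have "0 \<le> d" using dis_nonneg[of S] real by simp
  have prob: "prob_space \<pi>" "sets \<pi> = sets borel"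
    and marginals: "distr \<pi> borel fst = mX" "distr \<pi> borel snd = mY"
    using \<pi> by (simp_all add: transport_plans_def)
  obtain \<Phi> where \<Phi>: "parameter \<pi> \<Phi>" using parameter_exists[OF prob] by blast
  then have \<Phi>m: "\<Phi> \<in> unitI \<rightarrow>\<^sub>M borel" and \<pi>_eq: "distr unitI borel \<Phi> = \<pi>"
    by (auto simp: parameter_def)
  have "parameter mX (fst \<circ> \<Phi>)" "parameter mY (snd \<circ> \<Phi>)"
    using parameter_distr[OF \<Phi> borel_measurable_fst] parameter_distr[OF \<Phi> borel_measurable_snd]
    by (simp_all add: marginals)
  from box_dist_le[OF this]
  have "box_dist mX mY \<le> box_pm (\<lambda>s t. dist (fst (\<Phi> s)) (fst (\<Phi> t))) (\<lambda>s t. dist (snd (\<Phi> s)) (snd (\<Phi> t)))"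
    by simp
  also have "\<dots> \<le> max (1 - measure \<pi> S) d"
  proof (rule box_pm_le)
    have "measure \<pi> S = measure unitI (\<Phi> -` S \<inter> {0..<1})"
      using measure_distr[OF \<Phi>m S] \<pi>_eq by simp
    also have "\<dots> = measure lborel (\<Phi> -` S \<inter> {0..<1})" by (simp add: measure_unitI)
    finally show "1 - max (1 - measure \<pi> S) d \<le> measure lborel (\<Phi> -` S \<inter> {0..<1})" by simp
    show "\<Phi> -` S \<inter> {0..<1} \<in> sets borel"
      using measurable_sets[OF \<Phi>m S] by (simp add: sets_unitI_iff)
    show "\<bar>dist (fst (\<Phi> s)) (fst (\<Phi> t)) - dist (snd (\<Phi> s)) (snd (\<Phi> t))\<bar> \<le> max (1 - measure \<pi> S) d"
      if "s \<in> \<Phi> -` S \<inter> {0..<1}" "t \<in> \<Phi> -` S \<inter> {0..<1}" for s t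
      using distortion[of "\<Phi> s" "\<Phi> t"] that unfolding distortion_def by simp
  qed (use \<open>0 \<le> d\<close> in simp_all)
  finally show ?thesis
    using real by (cases "1 - measure \<pi> S \<le> d") (auto simp: max_def)
next
  case MInf then show ?thesis using dis_nonneg[of S] by simp
qed simp

lemma plan_near_box_dist:
  fixes mX :: "'a::polish_space measure" and mY :: "'b::polish_space measure"
  assumes "mm_measure mX" "mm_measure mY" "box_dist mX mY < c"
  obtains \<pi> S where "\<pi> \<in> transport_plans mX mY" "closed S" "1 - measure \<pi> S \<le> c" "dis S \<le> ereal c"
proof -
  obtain \<phi> \<psi> where \<phi>: "parameter mX \<phi>" and \<psi>: "parameter mY \<psi>"
    and lt: "box_pm (\<lambda>s t. dist (\<phi> s) (\<phi> t)) (\<lambda>s t. dist (\<psi> s) (\<psi> t)) < c"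
    using box_dist_lessE[OF assms] by blast
  obtain \<epsilon> I0 where \<epsilon>: "0 \<le> \<epsilon>" "\<epsilon> < c" and I0: "I0 \<in> sets borel" "I0 \<subseteq> {0..<1}"
    "1 - \<epsilon> \<le> measure lborel I0" and close: "\<And>s t. s \<in> I0 \<Longrightarrow> t \<in> I0 \<Longrightarrow> \<bar>dist (\<phi> s) (\<phi> t) - dist (\<psi> s) (\<psi> t)\<bar> \<le> \<epsilon>"
    using box_pm_lessE[OF lt] by blast
  define \<Phi> where "\<Phi> t = (\<phi> t, \<psi> t)" for t
  define \<pi> where "\<pi> = distr unitI borel \<Phi>"
  have \<pi>: "\<pi> \<in> transport_plans mX mY"
    unfolding \<pi>_def \<Phi>_def by (rule transport_plan_parameters[OF \<phi> \<psi>])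
  show ?thesis
  proof (cases "I0 = {}")
    case True
    then have "1 \<le> \<epsilon>" using I0(3) by simp
    then have "1 - measure \<pi> {\<Phi> 0} \<le> c"
      using \<epsilon>(2) measure_nonneg[of \<pi> "{\<Phi> 0}"] by linarith
    moreover have "dis {\<Phi> 0} \<le> ereal c" using \<epsilon> by (simp add: dis_singleton)
    ultimately show ?thesis using that[OF \<pi>] by blast
  next
    case False
    have \<Phi>m: "\<Phi> \<in> borel_measurable unitI"
      using \<phi> \<psi> unfolding \<Phi>_def parameter_def by (intro borel_measurable_Pair) simp_all
    define S where "S = closure (\<Phi> ` I0)"
    have "1 - c \<le> measure lborel I0" using I0(3) \<epsilon>(2) by simp
    also have "\<dots> = measure unitI I0" using I0(2) by (simp add: measure_unitI)
    also have "\<dots> \<le> measure unitI (\<Phi> -` S \<inter> space unitI)"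
      using I0(2) closure_subset[of "\<Phi> ` I0"] measurable_sets[OF \<Phi>m, of S]
      by (intro finite_measure.finite_measure_mono[OF finite_measure_unitI])
        (auto simp: S_def)
    also have "\<dots> = measure \<pi> S"
      unfolding \<pi>_def by (rule measure_distr[symmetric, OF \<Phi>m]) (simp add: S_def)
    finally have "1 - measure \<pi> S \<le> c" by simp
    moreover have "dis S \<le> ereal c"
    proof -
      have "dis (\<Phi> ` I0) \<le> ereal \<epsilon>"
        using False close by (auto simp: dis_le_ereal_iff distortion_def \<Phi>_def)
      then show ?thesis unfolding S_def using \<epsilon>(2) by (meson dis_closure_le ereal_less_eq(3) less_imp_le order_trans)
    qed
    ultimately show ?thesis using that[OF \<pi>, of S] by (simp add: S_def)
  qed
qed

subsection \<open>Attaining the box distance\<close>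

lemma convergent_subseq_countable:
  fixes f :: "'i::countable \<Rightarrow> nat \<Rightarrow> real"
  assumes bounded: "\<And>i n. \<bar>f i n\<bar> \<le> 1"
  shows "\<exists>r. strict_mono r \<and> (\<forall>i. convergent (\<lambda>n. f i (r n)))"
proof -
  interpret subseqs "\<lambda>j s. convergent (\<lambda>n. f (from_nat j) (s n))"
  proof
    fix j and s :: "nat \<Rightarrow> nat"
    have "bounded (range (\<lambda>n. f (from_nat j) (s n)))"
      using bounded by (auto simp: bounded_iff intro!: exI[of _ 1])
    then obtain l r where "strict_mono r" "((\<lambda>n. f (from_nat j) (s n)) \<circ> r) \<longlonglongrightarrow> l"
      using bounded_imp_convergent_subsequence by blast
    then show "\<exists>r. strict_mono r \<and> convergent (\<lambda>n. f (from_nat j) ((s \<circ> r) n))"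
      by (auto simp: convergent_def o_def)
  qed
  have conv: "convergent (\<lambda>n. f (from_nat j) (diagseq n))" for j
  proof -
    have "convergent (\<lambda>n. f (from_nat j) ((diagseq \<circ> (+) (Suc j)) n))"
      by (rule diagseq_holds) (auto simp: convergent_def o_def intro: LIMSEQ_subseq_LIMSEQ[unfolded o_def])
    then have "convergent (\<lambda>n. f (from_nat j) (diagseq (n + Suc j)))" by (simp add: o_def add.commute)
    then show ?thesis by (rule convergent_ignore_initial_segment[THEN iffD1])
  qed
  have "convergent (\<lambda>n. f i (diagseq n))" for i
    using conv[of "to_nat i"] by simp
  then show ?thesis using subseq_diagseq by blast
qed

lemma convergent_indicator_eventually:
  assumes "convergent (\<lambda>n. if P n then 1 else 0 :: real)"
  shows "eventually P sequentially \<or> eventually (\<lambda>n. \<not> P n) sequentially"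
proof -
  obtain L where "(\<lambda>n. if P n then 1 else 0 :: real) \<longlonglongrightarrow> L"
    using assms by (auto simp: convergent_def)
  from LIMSEQ_D[OF this, of "1/2"]
  obtain N where N: "\<And>n. n \<ge> N \<Longrightarrow> \<bar>(if P n then 1 else 0) - L\<bar> < 1/2"
    by auto
  have "P n = P N" if "n \<ge> N" for n
    using N[OF that] N[OF order_refl] by (auto simp: abs_less_iff split: if_splits)
  then show ?thesis
    by (cases "P N") (auto simp: eventually_sequentially)
qed

definition upper_limit :: "(nat \<Rightarrow> 'a::topological_space set) \<Rightarrow> 'a set" where
  "upper_limit S = (\<Inter>M. closure (\<Union>n\<in>{M..}. S n))"

lemma closed_upper_limit: "closed (upper_limit S)"
  unfolding upper_limit_def by (simp add: closed_INT)

lemma measure_upper_limit_ge: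
  assumes \<nu>: "finite_measure \<nu>" "sets \<nu> = sets borel"
    and \<mu>: "\<And>k. finite_measure (\<mu> k)" "\<And>k. sets (\<mu> k) = sets borel"
    and ge: "\<And>F c. closed F \<Longrightarrow> (\<And>e. e > 0 \<Longrightarrow> eventually (\<lambda>k. c - e \<le> measure (\<mu> k) F) sequentially)
      \<Longrightarrow> c \<le> measure \<nu> F"
    and mass: "\<And>k. c - \<delta> k \<le> measure (\<mu> k) (S k)" and \<delta>: "\<delta> \<longlonglongrightarrow> 0"
  shows "c \<le> measure \<nu> (upper_limit S)"
proof -
  have tail: "c \<le> measure \<nu> (closure (\<Union>n\<in>{M..}. S n))" for M
  proof (rule ge)
    fix e :: real assume "e > 0"
    have "eventually (\<lambda>k. k \<ge> M \<and> \<delta> k < e) sequentially"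
      using order_tendstoD(2)[OF \<delta> \<open>e > 0\<close>] by (auto simp: eventually_conj_iff eventually_ge_at_top)
    then show "eventually (\<lambda>k. c - e \<le> measure (\<mu> k) (closure (\<Union>n\<in>{M..}. S n))) sequentially"
    proof eventually_elim
      case (elim k)
      then have "S k \<subseteq> closure (\<Union>n\<in>{M..}. S n)" using closure_subset by fastforce
      then have "measure (\<mu> k) (S k) \<le> measure (\<mu> k) (closure (\<Union>n\<in>{M..}. S n))"
        using \<mu>(2) by (intro finite_measure.finite_measure_mono[OF \<mu>(1)]) auto
      then show ?case using mass[of k] elim by linarith
    qed
  qed simp
  have "decseq (\<lambda>M. closure (\<Union>n\<in>{M..}. S n))"
    unfolding decseq_def by (intro allI impI closure_mono) (auto intro: order_trans)
  moreover have "range (\<lambda>M. closure (\<Union>n\<in>{M..}. S n)) \<subseteq> sets \<nu>"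
    using \<nu>(2) by (auto intro: borel_closed)
  ultimately have "(\<lambda>M. measure \<nu> (closure (\<Union>n\<in>{M..}. S n))) \<longlonglongrightarrow> measure \<nu> (upper_limit S)"
    unfolding upper_limit_def by (intro finite_measure.finite_Lim_measure_decseq[OF \<nu>(1)])
  then show ?thesis using tail by (intro LIMSEQ_le_const) auto
qed

lemma upper_limit_eventually_near:
  fixes S :: "nat \<Rightarrow> 'a::{metric_space,second_countable_topology} set"
  assumes balls: "\<And>i m. eventually (\<lambda>n. S n \<inter> ball (dense_seq i) (inverse (Suc m)) \<noteq> {}) sequentially
      \<or> eventually (\<lambda>n. S n \<inter> ball (dense_seq i) (inverse (Suc m)) = {}) sequentially"
    and x: "x \<in> upper_limit S" and "e > 0"
  shows "eventually (\<lambda>n. \<exists>y\<in>S n. dist y x < e) sequentially"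
proof -
  obtain m where m: "inverse (Suc m) < e/2"
    using reals_Archimedean[of "e/2"] \<open>e > 0\<close> by auto
  obtain i where i: "dist x (dense_seq i) < inverse (Suc m)"
    using dense_seq_approx[of "inverse (Suc m)" x] by auto
  define B :: "'a set" where "B = ball (dense_seq i) (inverse (Suc m))"
  have "\<exists>\<^sub>F n in sequentially. S n \<inter> B \<noteq> {}"
    unfolding frequently_sequentially
  proof
    fix M
    have "x \<in> closure (\<Union>n\<in>{M..}. S n)" "x \<in> B"
      using x i by (auto simp: upper_limit_def B_def dist_commute)
    moreover have "open B" by (simp add: B_def)
    ultimately have "B \<inter> (\<Union>n\<in>{M..}. S n) \<noteq> {}"
      using open_Int_closure_eq_empty[of B] by blast
    then show "\<exists>n\<ge>M. S n \<inter> B \<noteq> {}" by auto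
  qed
  then have "eventually (\<lambda>n. S n \<inter> B \<noteq> {}) sequentially"
    using balls[of i m] by (auto simp: B_def frequently_def)
  then show ?thesis
  proof eventually_elim
    case (elim n)
    then obtain y where "y \<in> S n" "dist (dense_seq i) y < inverse (Suc m)" by (auto simp: B_def)
    then have "dist y x < e"
      using i m dist_triangle[of y x "dense_seq i"] by (simp add: dist_commute)
    then show ?case using \<open>y \<in> S n\<close> by blast
  qed
qed

lemma dis_le_of_eventually_near:
  assumes near: "\<And>x e. x \<in> L \<Longrightarrow> e > 0 \<Longrightarrow> eventually (\<lambda>n. \<exists>y\<in>T n. dist y x < e) sequentially"
    and dis: "\<And>n. dis (T n) \<le> ereal (c + \<delta> n)" and \<delta>: "\<delta> \<longlonglongrightarrow> 0" and "L \<noteq> {}"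
  shows "dis L \<le> ereal c"
proof -
  have "distortion x y \<le> c" if "x \<in> L" "y \<in> L" for x y
  proof (rule field_le_epsilon)
    fix e :: real assume "e > 0"
    have "eventually (\<lambda>n. (\<exists>x'\<in>T n. dist x' x < e/5) \<and> (\<exists>y'\<in>T n. dist y' y < e/5) \<and> \<delta> n < e/5)
      sequentially"
      using near[OF \<open>x \<in> L\<close>, of "e/5"] near[OF \<open>y \<in> L\<close>, of "e/5"]
        order_tendstoD(2)[OF \<delta>, of "e/5"] \<open>e > 0\<close>
      by (intro eventually_conj) simp_all
    then obtain n where "(\<exists>x'\<in>T n. dist x' x < e/5) \<and> (\<exists>y'\<in>T n. dist y' y < e/5) \<and> \<delta> n < e/5"
      using eventually_happens'[OF sequentially_bot] by blast
    then obtain x' y' where x': "x' \<in> T n" "dist x' x < e/5" and y': "y' \<in> T n" "dist y' y < e/5"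
      and "\<delta> n < e/5"
      by blast
    have "distortion x y \<le> distortion x' y' + 2 * (dist x x' + dist y y')"
      by (rule distortion_le_perturb)
    also have "distortion x' y' \<le> c + \<delta> n"
      using dis[of n] x'(1) y'(1) by (auto simp: dis_le_ereal_iff)
    finally show "distortion x y \<le> c + e"
      using x'(2) y'(2) \<open>\<delta> n < e/5\<close> by (simp add: dist_commute)
  qed
  then show ?thesis using \<open>L \<noteq> {}\<close> by (simp add: dis_le_ereal_iff)
qed

lemma measure_vimage_eq_distr:
  assumes "sets \<pi> = sets borel" "f \<in> borel_measurable borel" "A \<in> sets borel"
  shows "measure \<pi> (f -` A) = measure (distr \<pi> borel f) A"
proof -
  have "f \<in> borel_measurable \<pi>" using assms(2) by (simp add: measurable_cong_sets[OF assms(1) refl])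
  then show ?thesis
    using measure_distr[of f \<pi> borel A] assms(3) sets_eq_imp_space_eq[OF assms(1)] by simp
qed

lemma transport_plans_tight:
  fixes mX :: "'a::polish_space measure" and mY :: "'b::polish_space measure"
  assumes "mm_measure mX" "mm_measure mY" "e > 0"
  shows "\<exists>K. compact K \<and> (\<forall>\<pi>\<in>transport_plans mX mY. measure \<pi> (UNIV - K) \<le> e)"
proof -
  have "e/2 > 0" using assms(3) by simp
  obtain K1 where K1: "compact K1" "measure mX (UNIV - K1) \<le> e/2"
    using prob_space_tight[OF _ _ \<open>e/2 > 0\<close>, of mX] assms(1) unfolding mm_measure_def by blast
  obtain K2 where K2: "compact K2" "measure mY (UNIV - K2) \<le> e/2"
    using prob_space_tight[OF _ _ \<open>e/2 > 0\<close>, of mY] assms(2) unfolding mm_measure_def by blast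
  have sets: "UNIV - K1 \<in> sets borel" "UNIV - K2 \<in> sets borel"
    using borel_compact[OF K1(1)] borel_compact[OF K2(1)] by (simp_all add: Compl_eq_Diff_UNIV[symmetric])
  have "measure \<pi> (UNIV - K1 \<times> K2) \<le> e" if \<pi>: "\<pi> \<in> transport_plans mX mY" for \<pi>
  proof -
    have \<pi>': "finite_measure \<pi>" "sets \<pi> = sets borel"
      and marginals: "distr \<pi> borel fst = mX" "distr \<pi> borel snd = mY"
      using \<pi> by (auto simp: transport_plans_def prob_space_def)
    have vimages: "fst -` (UNIV - K1) \<in> sets \<pi>" "snd -` (UNIV - K2) \<in> sets \<pi>"
      using measurable_sets[OF borel_measurable_fst sets(1)] measurable_sets[OF borel_measurable_snd sets(2)] \<pi>'(2)
      by simp_all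
    have "measure \<pi> (UNIV - K1 \<times> K2) \<le> measure \<pi> (fst -` (UNIV - K1) \<union> snd -` (UNIV - K2))"
      using vimages by (intro finite_measure.finite_measure_mono[OF \<pi>'(1)]) auto
    also have "\<dots> \<le> measure \<pi> (fst -` (UNIV - K1)) + measure \<pi> (snd -` (UNIV - K2))"
      using vimages by (rule measure_Un_le)
    also have "\<dots> = measure mX (UNIV - K1) + measure mY (UNIV - K2)"
      using measure_vimage_eq_distr[OF \<pi>'(2) borel_measurable_fst sets(1)]
        measure_vimage_eq_distr[OF \<pi>'(2) borel_measurable_snd sets(2)] marginals
      by simp
    finally show ?thesis using K1(2) K2(2) by simp
  qed
  then show ?thesis using compact_Times[OF K1(1) K2(1)] by blast
qed

lemma distr_eq_of_limit:
  fixes m :: "'c::{complete_space,second_countable_topology} measure"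
  assumes m: "prob_space m" "sets m = sets borel" and \<nu>: "prob_space \<nu>" "sets \<nu> = sets borel"
    and f: "continuous_on UNIV f"
    and \<mu>: "\<And>n. sets (\<mu> n) = sets borel" "\<And>n. distr (\<mu> n) borel f = m"
    and ge: "\<And>F c. closed F \<Longrightarrow> (\<And>e. e > 0 \<Longrightarrow> eventually (\<lambda>n. c - e \<le> measure (\<mu> n) F) sequentially)
      \<Longrightarrow> c \<le> measure \<nu> F"
  shows "distr \<nu> borel f = m"
proof (rule measure_eqI_closed_le[OF m])
  have fm: "f \<in> borel_measurable borel" using f by (rule borel_measurable_continuous_onI)
  then show "prob_space (distr \<nu> borel f)" "sets (distr \<nu> borel f) = sets borel"
    using \<nu> by (simp_all add: prob_space.prob_space_distr measurable_cong_sets[OF \<nu>(2) refl])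
  fix F :: "'c set" assume F: "closed F"
  have "measure m F \<le> measure \<nu> (f -` F)"
  proof (rule ge)
    show "closed (f -` F)"
      using f F by (simp add: continuous_on_closed_vimage[OF closed_UNIV])
    show "eventually (\<lambda>n. measure m F - e \<le> measure (\<mu> n) (f -` F)) sequentially" if "e > 0" for e
      using measure_vimage_eq_distr[OF \<mu>(1) fm borel_closed[OF F]] \<mu>(2) that by simp
  qed
  then show "measure m F \<le> measure (distr \<nu> borel f) F"
    using measure_vimage_eq_distr[OF \<nu>(2) fm borel_closed[OF F]] by simp
qed

lemma transport_plan_limit:
  fixes mX :: "'a::polish_space measure" and mY :: "'b::polish_space measure"
  assumes mX: "mm_measure mX" and mY: "mm_measure mY"
    and plans: "\<And>k. \<mu> k \<in> transport_plans mX mY"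
    and conv: "\<And>ks. convergent (\<lambda>k. measure (\<mu> k) (cell ks))"
  obtains \<nu> where "\<nu> \<in> transport_plans mX mY"
    "\<And>F c. closed F \<Longrightarrow> (\<And>e. e > 0 \<Longrightarrow> eventually (\<lambda>k. c - e \<le> measure (\<mu> k) F) sequentially)
      \<Longrightarrow> c \<le> measure \<nu> F"
proof -
  have prob: "prob_space (\<mu> k)" "sets (\<mu> k) = sets borel"
    and marginals: "distr (\<mu> k) borel fst = mX" "distr (\<mu> k) borel snd = mY" for k
    using plans[of k] by (simp_all add: transport_plans_def)
  have tight: "\<exists>K. compact K \<and> (\<forall>k. measure (\<mu> k) (UNIV - K) \<le> e)" if "e > 0" for e
    using transport_plans_tight[OF mX mY that] plans by blast
  obtain \<phi> where \<phi>: "\<phi> \<in> borel_measurable unitI"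
    and ge: "\<And>F c. closed F \<Longrightarrow> (\<And>e. e > 0 \<Longrightarrow> eventually (\<lambda>k. c - e \<le> measure (\<mu> k) F) sequentially)
      \<Longrightarrow> c \<le> measure (distr unitI borel \<phi>) F"
    using tight_limit_parameter[OF prob tight conv] by blast
  define \<nu> where "\<nu> = distr unitI borel \<phi>"
  have \<nu>_prob: "prob_space \<nu>" "sets \<nu> = sets borel"
    by (simp_all add: \<nu>_def prob_space.prob_space_distr[OF prob_space_unitI \<phi>])
  have "continuous_on UNIV fst" "continuous_on UNIV snd" by (intro continuous_intros)+
  then have "\<nu> \<in> transport_plans mX mY"
    using \<nu>_prob mX mY prob(2) marginals
      distr_eq_of_limit[OF _ _ \<nu>_prob, of mX fst \<mu>] distr_eq_of_limit[OF _ _ \<nu>_prob, of mY snd \<mu>] ge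
    unfolding transport_plans_def mm_measure_def \<nu>_def by auto
  then show ?thesis using that ge unfolding \<nu>_def by blast
qed

lemma optimal_plan_exists:
  fixes mX :: "'a::polish_space measure" and mY :: "'b::polish_space measure"
  assumes mX: "mm_measure mX" and mY: "mm_measure mY"
  obtains \<pi> S where "\<pi> \<in> transport_plans mX mY" "closed S"
    "1 - measure \<pi> S \<le> box_dist mX mY" "dis S \<le> ereal (box_dist mX mY)"
proof -
  define V where "V = box_dist mX mY"
  have "\<exists>\<pi> S. \<pi> \<in> transport_plans mX mY \<and> 1 - measure \<pi> S \<le> V + inverse (Suc n)
      \<and> dis S \<le> ereal (V + inverse (Suc n))" for n
  proof -
    have "box_dist mX mY < V + inverse (Suc n)" by (simp add: V_def)
    from plan_near_box_dist[OF mX mY this] show ?thesis by blast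
  qed
  then obtain \<pi> S where plans: "\<And>n. \<pi> n \<in> transport_plans mX mY"
    and mass: "\<And>n. 1 - measure (\<pi> n) (S n) \<le> V + inverse (Suc n)"
    and distort: "\<And>n. dis (S n) \<le> ereal (V + inverse (Suc n))"
    by metis
  have prob: "prob_space (\<pi> n)" "sets (\<pi> n) = sets borel" for n
    using plans[of n] by (simp_all add: transport_plans_def)

  \<comment> \<open>Extract a subsequence along which the masses of all cells converge and each \<open>S n\<close>
    eventually meets or eventually misses each ball of a countable base.\<close>
  define feature :: "nat list + nat \<times> nat \<Rightarrow> nat \<Rightarrow> real" where
    "feature x n = (case x of Inl ks \<Rightarrow> measure (\<pi> n) (cell ks)
       | Inr (i, m) \<Rightarrow> if S n \<inter> ball (dense_seq i) (inverse (Suc m)) \<noteq> {} then 1 else 0)" for x n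
  have "\<bar>feature x n\<bar> \<le> 1" for x n
    by (cases x) (auto simp: feature_def prob_space.prob_le_1[OF prob(1)])
  then obtain r where r: "strict_mono r" "\<And>x. convergent (\<lambda>k. feature x (r k))"
    using convergent_subseq_countable by blast

  have conv: "convergent (\<lambda>k. measure (\<pi> (r k)) (cell ks))" for ks
    using r(2)[of "Inl ks"] by (simp add: feature_def)
  obtain \<nu> where \<nu>: "\<nu> \<in> transport_plans mX mY"
    and ge: "\<And>F c. closed F \<Longrightarrow> (\<And>e. e > 0 \<Longrightarrow> eventually (\<lambda>k. c - e \<le> measure (\<pi> (r k)) F) sequentially)
      \<Longrightarrow> c \<le> measure \<nu> F"
    using transport_plan_limit[OF mX mY plans conv] by blast
  have \<nu>_prob: "prob_space \<nu>" "sets \<nu> = sets borel" using \<nu> by (simp_all add: transport_plans_def)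
  have \<delta>: "(\<lambda>k. inverse (real (Suc (r k)))) \<longlonglongrightarrow> 0"
    using LIMSEQ_subseq_LIMSEQ[OF LIMSEQ_inverse_real_of_nat r(1)] by (simp add: o_def)
  define L where "L = upper_limit (\<lambda>k. S (r k))"
  have "1 - V \<le> measure \<nu> L"
    unfolding L_def
  proof (rule measure_upper_limit_ge[OF _ \<nu>_prob(2) _ prob(2) ge _ \<delta>])
    show "finite_measure \<nu>" "finite_measure (\<pi> (r k))" for k
      using \<nu>_prob(1) prob(1) by (simp_all add: prob_space_def)
    show "1 - V - inverse (real (Suc (r k))) \<le> measure (\<pi> (r k)) (S (r k))" for k
      using mass[of "r k"] by simp
  qed
  show ?thesis
  proof (cases "L = {}")
    case True
    then have "1 \<le> V" using \<open>1 - V \<le> measure \<nu> L\<close> by simp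
    then have "1 - measure \<nu> {undefined} \<le> V" using measure_nonneg[of \<nu> "{undefined}"] by linarith
    moreover have "dis {undefined} \<le> ereal V"
      using box_dist_nonneg[OF mX mY] by (simp add: dis_singleton V_def)
    ultimately show ?thesis using that[OF \<nu> closed_singleton] by (simp add: V_def)
  next
    case False
    have balls: "eventually (\<lambda>k. S (r k) \<inter> ball (dense_seq i) (inverse (Suc m)) \<noteq> {}) sequentially
      \<or> eventually (\<lambda>k. S (r k) \<inter> ball (dense_seq i) (inverse (Suc m)) = {}) sequentially" for i m
    proof -
      have "convergent (\<lambda>k. if S (r k) \<inter> ball (dense_seq i) (inverse (Suc m)) \<noteq> {} then 1 else 0 :: real)"
        using r(2)[of "Inr (i, m)"] by (simp add: feature_def)
      from convergent_indicator_eventually[OF this] show ?thesis by simp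
    qed
    have near: "eventually (\<lambda>k. \<exists>y\<in>S (r k). dist y x < e) sequentially"
      if "x \<in> L" "e > 0" for x e
      using upper_limit_eventually_near[of "\<lambda>k. S (r k)", OF balls] that unfolding L_def .
    have "dis (S (r k)) \<le> ereal (V + inverse (real (Suc (r k))))" for k
      by (rule distort)
    then have "dis L \<le> ereal V"
      by (intro dis_le_of_eventually_near[OF near _ \<delta> False])
    moreover have "1 - measure \<nu> L \<le> V" using \<open>1 - V \<le> measure \<nu> L\<close> by simp
    moreover have "closed L" unfolding L_def by (rule closed_upper_limit)
    ultimately show ?thesis using that[OF \<nu>] unfolding V_def by blast
  qed
qed

theorem theorem1p1:
  fixes mX :: "'a::polish_space measure" and mY :: "'b::polish_space measure"
  assumes "mm_measure mX" and "mm_measure mY"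
  shows "\<exists>\<pi> S. \<pi> \<in> transport_plans mX mY \<and> closed S \<and>
           max (ereal (1 - measure \<pi> S)) (dis S) = ereal (box_dist mX mY) \<and>
           (\<forall>\<pi>' S'. \<pi>' \<in> transport_plans mX mY \<and> closed S' \<longrightarrow>
              max (ereal (1 - measure \<pi> S)) (dis S) \<le> max (ereal (1 - measure \<pi>' S')) (dis S'))"
proof -
  obtain \<pi> S where \<pi>: "\<pi> \<in> transport_plans mX mY" and S: "closed S"
    and "1 - measure \<pi> S \<le> box_dist mX mY" "dis S \<le> ereal (box_dist mX mY)"
    using optimal_plan_exists[OF assms] .
  then have le: "max (ereal (1 - measure \<pi> S)) (dis S) \<le> ereal (box_dist mX mY)"
    by simp
  have ge: "ereal (box_dist mX mY) \<le> max (ereal (1 - measure \<pi>' S')) (dis S')"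
    if "\<pi>' \<in> transport_plans mX mY" "closed S'" for \<pi>' S'
    using box_dist_le_plan[OF that(1) borel_closed[OF that(2)]] .
  show ?thesis
    using \<pi> S antisym[OF le ge[OF \<pi> S]] order_trans[OF le ge] by blast
qed

end
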